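(* Let $U$ be a countably infinite universe, $\mathcal{C}=(L_1,L_2,\ldots)$ a countably infinite collection of languages over $U$, and consider the Noisy Procedure in the context. For any $n\ge0$, $i\ge1$, and any step $l\ge p(n,i)$ (where $p(n,i)$ is the position of $(n,i)$ in the diagonal order), let $k$ be the position of the entry $L_{n,i}$ in $\mathcal{C}'_l=(L'_1,\ldots,L'_l)$ at the end of step $l$. Then $T(L_{n,i})$ is a set of maximum size among all sets $T$ satisfying: $T$ is finite, and there exists a subcollection $\mathcal{D}$ of the entries $(L'_1,\ldots,L'_k)$ that includes $L'_k$, whose intersection $\bigcap_{L_{a,b}\in\mathcal{D}}L_b$ is finite, and such that $T$ is $a$-contained in $L_b$ for every entry $L_{a,b}\in\mathcal{D}$.
   Context: A language is an infinite subset of $U$; a collection is a sequence of languages (repetitions allowed, entries distinguished by index). For a set $T$, language $L$ and integer $a\ge0$, $T$ is $a$-contained in $L$ if $\sum_{x\in T}\mathbf{1}[x\notin L]\le a$. Diagonal order: pairs $(n,i)$, $n\ge0$, $i\ge1$, ordered as $(0,1),(1,1),(0,2),(2,1),(1,2),(0,3),\ldots$, i.e. for $n'=0,1,2,\ldots$ and $h=0,\ldots,n'$ the pair $(n'-h,h+1)$. Each pair $(a,b)$ has an entry $L_{a,b}$, a copy of $L_b$ labelled $(a,b)$. Noisy Procedure. Set $\mathcal{C}'_0=()$. For $l=1,2,\ldots$, let $(n,i)$ be the $l$-th pair; append $L_{n,i}$ to the end of $\mathcal{C}'_{l-1}$ to get $\mathcal{C}'_l=(L'_1,\ldots,L'_l)$,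 set $j=l$. Repeat: (A) let $T$ be a finite subset of $U$ of largest size for which there is a subcollection $\mathcal{D}$ of the entries $(L'_1,\ldots,L'_j)$ including $L'_j$, with $T$ $a$-contained in $L_b$ for every entry $L_{a,b}\in\mathcal{D}$ and $\bigcap_{L_{a,b}\in\mathcal{D}}L_b$ finite; let $\mathcal{C}_{\mathrm{chk}}$ be such a $\mathcal{D}$ and $m_{\mathrm{chk}}=|T|$ ($0$ if no such $\mathcal{D}$ exists). (B) If $j\le1$ or $m_{\mathrm{chk}}>m^\star_a(L_b)$ where $L'_{j-1}=L_{a,b}$, stop. (C) Otherwise swap the entries at positions $j-1,j$ in $\mathcal{C}'_l$, set $j\leftarrow j-1$, return to (A). On stopping, set $T(L_{n,i})=T$, $\mathcal{C}(L_{n,i})=\mathcal{C}_{\mathrm{chk}}$, $m^\star_n(L_i)=m_{\mathrm{chk}}$; the ordering $\mathcal{C}'_l$ at the end of step $l$ is the one obtained when this loop stops. *)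

theory Defs
  imports Main "HOL-Library.Countable_Set"
begin

text \<open>Entries L_{a,b} are represented by pairs (a,b) :: nat \<times> nat; the
  collection is L :: nat \<Rightarrow> 'u set, indexed from 1 (L 0 unused).
  An ordering C'_l is a list of entries.\<close>

definition diag :: "nat \<Rightarrow> nat \<times> nat" where
  "diag l = concat (map (\<lambda>n'. map (\<lambda>h. (n' - h, Suc h)) [0..<Suc n']) [0..<l]) ! (l - 1)"

definition diag_pos :: "nat \<times> nat \<Rightarrow> nat" where
  "diag_pos e = (LEAST l. 1 \<le> l \<and> diag l = e)"

definition acont :: "nat \<Rightarrow> 'u set \<Rightarrow> 'u set \<Rightarrow> bool" where
  "acont a T L \<longleftrightarrow> card (T - L) \<le> a"

definition adm :: "(nat \<Rightarrow> 'u set) \<Rightarrow> (nat \<times> nat) list \<Rightarrow> 'u set \<Rightarrow> nat set \<Rightarrow> bool" where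
  "adm L E T D \<longleftrightarrow> E \<noteq> [] \<and> finite T \<and> D \<subseteq> {..<length E} \<and> length E - 1 \<in> D
     \<and> finite (\<Inter>d\<in>D. L (snd (E ! d)))
     \<and> (\<forall>d\<in>D. acont (fst (E ! d)) T (L (snd (E ! d))))"

definition mchk :: "(nat \<Rightarrow> 'u set) \<Rightarrow> (nat \<times> nat) list \<Rightarrow> nat" where
  "mchk L E = (if \<exists>T D. adm L E T D then Max {card T | T. \<exists>D. adm L E T D} else 0)"

text \<open>The new entry ends at
  0-based position q, i.e. the inner loop stops at j = q+1. For every j with
  q+1 < j \<le> l the loop continued (swap), at j = q+1 it stopped.
  Tset / mstar record T(L_{n,i}) and m*_n(L_i); if no admissible D exists, T := {}.\<close>
definition step_ok :: "(nat \<Rightarrow> 'u set) \<Rightarrow> (nat \<Rightarrow> (nat \<times> nat) list)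
    \<Rightarrow> (nat \<times> nat \<Rightarrow> 'u set) \<Rightarrow> (nat \<times> nat \<Rightarrow> nat) \<Rightarrow> nat \<Rightarrow> bool" where
  "step_ok L ord Tset mstar l \<longleftrightarrow>
    (let prev = ord (l - 1); new = diag l in
     \<exists>q \<le> l - 1.
       ord l = take q prev @ new # drop q prev
     \<and> (\<forall>j. q + 1 < j \<and> j \<le> l \<longrightarrow>
            mchk L (take (j - 1) prev @ [new]) \<le> mstar (prev ! (j - 2)))
     \<and> (q = 0 \<or> mstar (prev ! (q - 1)) < mchk L (take q prev @ [new]))
     \<and> mstar new = mchk L (take q prev @ [new])
     \<and> (if \<exists>T D. adm L (take q prev @ [new]) T D
        then (\<exists>D. adm L (take q prev @ [new]) (Tset new) D)
             \<and> (\<forall>T D. adm L (take q prev @ [new]) T D \<longrightarrow> card T \<le> card (Tset new))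
        else Tset new = {}))"

definition noisy_run :: "(nat \<Rightarrow> 'u set) \<Rightarrow> (nat \<Rightarrow> (nat \<times> nat) list)
    \<Rightarrow> (nat \<times> nat \<Rightarrow> 'u set) \<Rightarrow> (nat \<times> nat \<Rightarrow> nat) \<Rightarrow> bool" where
  "noisy_run L ord Tset mstar \<longleftrightarrow> ord 0 = [] \<and> (\<forall>l \<ge> 1. step_ok L ord Tset mstar l)"

end

theory Submission
  imports Defs
begin

text \<open>When L_{n,i} is inserted, m*_n(L_i) = |T(L_{n,i})| is the maximum over its prefix at that
  time. Afterwards a new entry ends up in front of L_{n,i} only by being swapped past it, which the
  procedure does only if m_chk of the prefix of L_{n,i} extended by the new entry is at most
  m*_n(L_i). Hence, by induction on the step, every admissible T for the current prefix ending in
  L_{n,i} has size at most m*_n(L_i) = |T(L_{n,i})|; and since that prefix only grows,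
  T(L_{n,i}) itself stays admissible.\<close>

subsection \<open>Injectivity of the diagonal order\<close>

definition diag_row :: "nat \<Rightarrow> (nat \<times> nat) list" where
  "diag_row n' = map (\<lambda>h. (n' - h, Suc h)) [0..<Suc n']"

definition diag_rows :: "nat \<Rightarrow> (nat \<times> nat) list" where
  "diag_rows N = concat (map diag_row [0..<N])"

lemma diag_eq_nth_diag_rows: "diag l = diag_rows l ! (l - 1)"
  unfolding diag_def diag_rows_def diag_row_def by simp

lemma diag_rows_Suc: "diag_rows (Suc N) = diag_rows N @ diag_row N"
  unfolding diag_rows_def by simp

lemma length_diag_rows_ge: "N \<le> length (diag_rows N)"
  by (induction N) (auto simp: diag_rows_Suc diag_row_def diag_rows_def)

lemma sum_le_of_mem_diag_rows: "e \<in> set (diag_rows N) \<Longrightarrow> fst e + snd e \<le> N"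
  by (induction N) (auto simp: diag_rows_Suc diag_row_def diag_rows_def)

lemma distinct_diag_rows: "distinct (diag_rows N)"
proof (induction N)
  case 0
  then show ?case by (simp add: diag_rows_def)
next
  case (Suc N)
  have "distinct (diag_row N)"
    unfolding diag_row_def by (auto simp: distinct_map inj_on_def)
  moreover have "set (diag_rows N) \<inter> set (diag_row N) = {}"
    using sum_le_of_mem_diag_rows[of _ N] by (fastforce simp: diag_row_def)
  ultimately show ?case
    using Suc by (simp add: diag_rows_Suc)
qed

lemma nth_diag_rows_mono:
  assumes "m < length (diag_rows N)" and "N \<le> M"
  shows "diag_rows M ! m = diag_rows N ! m"
proof -
  have "\<exists>ys. diag_rows M = diag_rows N @ ys"
    using \<open>N \<le> M\<close> by (induction M rule: dec_induct) (auto simp: diag_rows_Suc)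
  then show ?thesis
    using assms(1) by (auto simp: nth_append)
qed

lemma inj_on_diag: "inj_on diag {1..}"
proof (rule inj_onI)
  fix l1 l2 :: nat
  assume "l1 \<in> {1..}" "l2 \<in> {1..}" and eq: "diag l1 = diag l2"
  define M where "M = max l1 l2"
  have "l1 - 1 < length (diag_rows l1)" "l2 - 1 < length (diag_rows l2)"
    using \<open>l1 \<in> {1..}\<close> \<open>l2 \<in> {1..}\<close> length_diag_rows_ge[of l1] length_diag_rows_ge[of l2]
    by auto
  then have "diag l1 = diag_rows M ! (l1 - 1)" "diag l2 = diag_rows M ! (l2 - 1)"
    using nth_diag_rows_mono[of "l1 - 1" l1 M] nth_diag_rows_mono[of "l2 - 1" l2 M]
    by (simp_all add: diag_eq_nth_diag_rows M_def)
  moreover have "l1 - 1 < length (diag_rows M)" "l2 - 1 < length (diag_rows M)"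
    using length_diag_rows_ge[of M] \<open>l1 \<in> {1..}\<close> \<open>l2 \<in> {1..}\<close> by (auto simp: M_def)
  ultimately have "l1 - 1 = l2 - 1"
    using eq distinct_diag_rows[of M] nth_eq_iff_index_eq by metis
  then show "l1 = l2"
    using \<open>l1 \<in> {1..}\<close> \<open>l2 \<in> {1..}\<close> by simp
qed

subsection \<open>Admissible sets\<close>

text \<open>Admissibility depends on the subcollection D only through the set of entries it selects.\<close>

definition adm_set :: "(nat \<Rightarrow> 'u set) \<Rightarrow> 'u set \<Rightarrow> (nat \<times> nat) set \<Rightarrow> bool" where
  "adm_set L T S \<longleftrightarrow> finite T \<and> finite (\<Inter>e\<in>S. L (snd e))
     \<and> (\<forall>e\<in>S. acont (fst e) T (L (snd e)))"

lemma ex_adm_iff: "(\<exists>D. adm L E T D) \<longleftrightarrow> (\<exists>S \<subseteq> set E. last E \<in> S \<and> adm_set L T S)"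
proof
  assume "\<exists>D. adm L E T D"
  then obtain D where D: "adm L E T D" ..
  then have "E \<noteq> []" "length E - 1 \<in> D" "D \<subseteq> {..<length E}"
    by (auto simp: adm_def)
  moreover have "(\<Inter>e\<in>(!) E ` D. L (snd e)) = (\<Inter>d\<in>D. L (snd (E ! d)))"
    by auto
  ultimately show "\<exists>S \<subseteq> set E. last E \<in> S \<and> adm_set L T S"
    using D by (intro exI[of _ "(!) E ` D"]) (auto simp: adm_def adm_set_def last_conv_nth)
next
  assume "\<exists>S \<subseteq> set E. last E \<in> S \<and> adm_set L T S"
  then obtain S where S: "S \<subseteq> set E" "last E \<in> S" "adm_set L T S"
    by blast
  then have "E \<noteq> []"
    by auto
  define D where "D = {d. d < length E \<and> E ! d \<in> S}"
  have img: "(!) E ` D = S"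
    using S(1) by (force simp: D_def in_set_conv_nth)
  then have "(\<Inter>d\<in>D. L (snd (E ! d))) = (\<Inter>e\<in>S. L (snd e))"
    by auto
  moreover have "length E - 1 \<in> D"
    using \<open>E \<noteq> []\<close> S(2) by (simp add: D_def last_conv_nth)
  ultimately have "adm L E T D"
    using S(3) \<open>E \<noteq> []\<close> img unfolding adm_def adm_set_def D_def by auto
  then show "\<exists>D. adm L E T D" ..
qed

lemma adm_transfer:
  assumes "adm L E T D" and "set E \<subseteq> set E'" and "last E' = last E"
  shows "\<exists>D'. adm L E' T D'"
proof -
  obtain S where "S \<subseteq> set E" "last E \<in> S" "adm_set L T S"
    using assms(1) ex_adm_iff[of L E T] by blast
  then show ?thesis
    using assms(2,3) ex_adm_iff[of L E' T] by auto
qed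

lemma card_le_adm_bound:
  assumes "adm L E T D"
  shows "card T \<le> card (\<Inter>d\<in>D. L (snd (E ! d))) + (\<Sum>d\<in>D. fst (E ! d))"
proof -
  let ?I = "\<Inter>d\<in>D. L (snd (E ! d))"
  let ?U = "\<Union>d\<in>D. T - L (snd (E ! d))"
  have fin: "finite T" "finite ?I" "finite D"
    using assms by (auto simp: adm_def intro: finite_subset)
  then have "card T \<le> card (?I \<union> ?U)"
    by (intro card_mono) auto
  also have "\<dots> \<le> card ?I + card ?U"
    by (rule card_Un_le)
  also have "card ?U \<le> (\<Sum>d\<in>D. card (T - L (snd (E ! d))))"
    using fin(3) by (rule card_UN_le)
  also have "\<dots> \<le> (\<Sum>d\<in>D. fst (E ! d))"
    using assms by (intro sum_mono) (auto simp: adm_def acont_def)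
  finally show ?thesis
    by simp
qed

lemma finite_adm_cards: "finite {card T | T. \<exists>D. adm L E T D}"
proof (rule finite_subset)
  let ?b = "\<lambda>D. card (\<Inter>d\<in>D. L (snd (E ! d))) + (\<Sum>d\<in>D. fst (E ! d))"
  show "{card T | T. \<exists>D. adm L E T D} \<subseteq> (\<Union>D\<in>Pow {..<length E}. {..?b D})"
  proof
    fix c
    assume "c \<in> {card T | T. \<exists>D. adm L E T D}"
    then obtain T D where "c = card T" "adm L E T D"
      by blast
    then show "c \<in> (\<Union>D\<in>Pow {..<length E}. {..?b D})"
      using card_le_adm_bound[of L E T D] by (auto simp: adm_def)
  qed
  show "finite (\<Union>D\<in>Pow {..<length E}. {..?b D})"
    by auto
qed

lemma card_le_mchk: "adm L E T D \<Longrightarrow> card T \<le> mchk L E"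
  unfolding mchk_def using finite_adm_cards[of L E] by (auto intro!: Max_ge)

lemma adm_set_card_le_mchk:
  assumes "adm_set L T S" and "S \<subseteq> set E" and "last E \<in> S"
  shows "card T \<le> mchk L E"
  using assms ex_adm_iff[of L E T] card_le_mchk by blast

lemma mchk_eq_card:
  assumes "adm L E T0 D0" and "\<forall>T D. adm L E T D \<longrightarrow> card T \<le> card T0"
  shows "mchk L E = card T0"
  unfolding mchk_def using assms finite_adm_cards[of L E] by (auto intro!: Max_eqI)

lemma max_adm_transfer:
  assumes max: "if \<exists>T D. adm L E0 T D
      then (\<exists>D. adm L E0 T0 D) \<and> (\<forall>T D. adm L E0 T D \<longrightarrow> card T \<le> card T0)
      else T0 = {}"
    and sub: "set E0 \<subseteq> set E" and last: "last E = last E0"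
    and bound: "\<And>T D. adm L E T D \<Longrightarrow> card T \<le> mchk L E0"
  shows "finite T0 \<and> (\<forall>T D. adm L E T D \<longrightarrow> card T \<le> card T0)
    \<and> ((\<exists>T D. adm L E T D) \<longrightarrow> (\<exists>D. adm L E T0 D))"
proof (cases "\<exists>T D. adm L E0 T D")
  case True
  with max obtain D0 where D0: "adm L E0 T0 D0"
    and le: "\<forall>T D. adm L E0 T D \<longrightarrow> card T \<le> card T0"
    by auto
  have "finite T0"
    using D0 by (simp add: adm_def)
  moreover have "mchk L E0 = card T0"
    using D0 le by (rule mchk_eq_card)
  ultimately show ?thesis
    using bound adm_transfer[OF D0 sub last] by auto
next
  case False
  then have "T0 = {}" "mchk L E0 = 0"
    using max by (auto simp: mchk_def)
  have empty: "T = {}" if "adm L E T D" for T D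
    using that bound[OF that] \<open>mchk L E0 = 0\<close> by (simp add: adm_def)
  show ?thesis
  proof (intro conjI allI impI)
    show "finite T0"
      using \<open>T0 = {}\<close> by simp
    show "card T \<le> card T0" if "adm L E T D" for T D
      using empty[OF that] by simp
    assume "\<exists>T D. adm L E T D"
    then obtain T D where "adm L E T D"
      by blast
    then show "\<exists>D. adm L E T0 D"
      using empty \<open>T0 = {}\<close> by blast
  qed
qed

definition prefix_upto :: "'a \<Rightarrow> 'a list \<Rightarrow> 'a list" where
  "prefix_upto x xs = takeWhile (\<lambda>y. y \<noteq> x) xs @ [x]"

lemma last_prefix_upto: "last (prefix_upto x xs) = x"
  unfolding prefix_upto_def by simp

lemma takeWhile_neq_append_Cons: "x \<notin> set A \<Longrightarrow> takeWhile (\<lambda>y. y \<noteq> x) (A @ x # B) = A"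
  by (induction A) auto

lemma take_Suc_eq_prefix_upto:
  assumes "distinct xs" and "k < length xs"
  shows "take (Suc k) xs = prefix_upto (xs ! k) xs"
proof -
  have "xs ! k \<notin> set (take k xs)"
    using assms by (auto simp: in_set_conv_nth nth_eq_iff_index_eq)
  then have "takeWhile (\<lambda>y. y \<noteq> xs ! k) (take k xs @ xs ! k # drop (Suc k) xs) = take k xs"
    by (rule takeWhile_neq_append_Cons)
  then show ?thesis
    using assms(2) by (simp add: prefix_upto_def take_Suc_conv_app_nth id_take_nth_drop[symmetric])
qed

lemma prefix_upto_insert_new:
  assumes "x \<notin> set xs"
  shows "prefix_upto x (take q xs @ x # drop q xs) = take q xs @ [x]"
proof -
  have "x \<notin> set (take q xs)"
    using assms by (auto dest: in_set_takeD)
  then show ?thesis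
    by (simp add: prefix_upto_def takeWhile_neq_append_Cons)
qed

lemma set_prefix_upto_insert:
  assumes "x \<noteq> y"
  shows "set (prefix_upto x (take q xs @ y # drop q xs)) =
    (if x \<in> set (take q xs) then set (prefix_upto x xs) else insert y (set (prefix_upto x xs)))"
proof (cases "x \<in> set (take q xs)")
  case True
  then have "\<exists>z \<in> set (take q xs). \<not> z \<noteq> x"
    by blast
  then show ?thesis
    using True takeWhile_append1[of _ "take q xs" "\<lambda>z. z \<noteq> x"]
    by (metis append_take_drop_id prefix_upto_def)
next
  case False
  then have "takeWhile (\<lambda>z. z \<noteq> x) (take q xs @ B) = take q xs @ takeWhile (\<lambda>z. z \<noteq> x) B"
    for B by (intro takeWhile_append2) auto
  from this[of "y # drop q xs"] this[of "drop q xs"] show ?thesis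
    using False assms by (auto simp: prefix_upto_def)
qed

subsection \<open>Runs of the Noisy Procedure\<close>

lemma noisy_run_stepE:
  assumes "noisy_run L ord Tset mstar"
  obtains q where "ord (Suc l) = take q (ord l) @ diag (Suc l) # drop q (ord l)"
    and "\<forall>j. q + 1 < j \<and> j \<le> Suc l \<longrightarrow>
      mchk L (take (j - 1) (ord l) @ [diag (Suc l)]) \<le> mstar (ord l ! (j - 2))"
    and "mstar (diag (Suc l)) = mchk L (take q (ord l) @ [diag (Suc l)])"
    and "if \<exists>T D. adm L (take q (ord l) @ [diag (Suc l)]) T D
      then (\<exists>D. adm L (take q (ord l) @ [diag (Suc l)]) (Tset (diag (Suc l))) D)
        \<and> (\<forall>T D. adm L (take q (ord l) @ [diag (Suc l)]) T D
             \<longrightarrow> card T \<le> card (Tset (diag (Suc l))))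
      else Tset (diag (Suc l)) = {}"
proof -
  have "step_ok L ord Tset mstar (Suc l)"
    using assms unfolding noisy_run_def by simp
  then show ?thesis
    unfolding step_ok_def Let_def diff_Suc_1 by (elim exE conjE) (rule that; assumption)
qed

lemma diag_Suc_notin_diag_image: "diag (Suc l) \<notin> diag ` {1..l}"
  using inj_on_diag by (fastforce simp: inj_on_def)

lemma noisy_run_ord:
  assumes "noisy_run L ord Tset mstar"
  shows "length (ord l) = l \<and> distinct (ord l) \<and> set (ord l) = diag ` {1..l}"
proof (induction l)
  case 0
  then show ?case
    using assms by (simp add: noisy_run_def)
next
  case (Suc l)
  obtain q where q: "ord (Suc l) = take q (ord l) @ diag (Suc l) # drop q (ord l)"
    using noisy_run_stepE[OF assms] by metis
  have "diag (Suc l) \<notin> set (ord l)"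
    using Suc diag_Suc_notin_diag_image by simp
  then have "diag (Suc l) \<notin> set (take q (ord l)) \<union> set (drop q (ord l))"
    by (auto dest: in_set_takeD in_set_dropD)
  moreover have "set (take q (ord l)) \<inter> set (drop q (ord l)) = {}"
    using Suc by (simp add: set_take_disj_set_drop_if_distinct)
  moreover have "set (take q (ord l)) \<union> set (drop q (ord l)) = diag ` {1..l}"
    using Suc by (metis append_take_drop_id set_append)
  moreover have "diag ` {1..Suc l} = insert (diag (Suc l)) (diag ` {1..l})"
    by (simp add: atLeastAtMostSuc_conv)
  ultimately show ?case
    using Suc q by auto
qed

lemma diag_mem_ord:
  "noisy_run L ord Tset mstar \<Longrightarrow> 1 \<le> l0 \<Longrightarrow> l0 \<le> l \<Longrightarrow> diag l0 \<in> set (ord l)"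
  using noisy_run_ord by fastforce

lemma diag_Suc_notin_ord: "noisy_run L ord Tset mstar \<Longrightarrow> diag (Suc l) \<notin> set (ord l)"
  using noisy_run_ord diag_Suc_notin_diag_image by metis

lemma noisy_run_records:
  assumes run: "noisy_run L ord Tset mstar" and "1 \<le> l0"
  defines "x \<equiv> diag l0" and "E0 \<equiv> prefix_upto (diag l0) (ord l0)"
  shows "mstar x = mchk L E0"
    and "if \<exists>T D. adm L E0 T D
      then (\<exists>D. adm L E0 (Tset x) D) \<and> (\<forall>T D. adm L E0 T D \<longrightarrow> card T \<le> card (Tset x))
      else Tset x = {}"
proof -
  obtain m where m: "l0 = Suc m"
    using \<open>1 \<le> l0\<close> by (cases l0) auto
  obtain q where q: "ord l0 = take q (ord m) @ x # drop q (ord m)"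
    and rec: "mstar x = mchk L (take q (ord m) @ [x])"
      "if \<exists>T D. adm L (take q (ord m) @ [x]) T D
        then (\<exists>D. adm L (take q (ord m) @ [x]) (Tset x) D)
          \<and> (\<forall>T D. adm L (take q (ord m) @ [x]) T D \<longrightarrow> card T \<le> card (Tset x))
        else Tset x = {}"
    using noisy_run_stepE[OF run, of m] unfolding x_def m by metis
  have "x \<notin> set (ord m)"
    using diag_Suc_notin_ord[OF run] by (simp add: x_def m)
  then have "E0 = take q (ord m) @ [x]"
    using q prefix_upto_insert_new by (simp add: E0_def x_def)
  then show "mstar x = mchk L E0" and "if \<exists>T D. adm L E0 T D
      then (\<exists>D. adm L E0 (Tset x) D) \<and> (\<forall>T D. adm L E0 T D \<longrightarrow> card T \<le> card (Tset x))
      else Tset x = {}"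
    using rec by simp_all
qed

lemma set_prefix_upto_ord_mono:
  assumes run: "noisy_run L ord Tset mstar" and "1 \<le> l0" and "l0 \<le> l"
  shows "set (prefix_upto (diag l0) (ord l0)) \<subseteq> set (prefix_upto (diag l0) (ord l))"
  using \<open>l0 \<le> l\<close>
proof (induction l rule: dec_induct)
  case base
  then show ?case by simp
next
  case (step l)
  obtain q where "ord (Suc l) = take q (ord l) @ diag (Suc l) # drop q (ord l)"
    using noisy_run_stepE[OF run] by metis
  moreover have "diag l0 \<noteq> diag (Suc l)"
    using diag_mem_ord[OF run \<open>1 \<le> l0\<close> step(1)] diag_Suc_notin_ord[OF run] by metis
  ultimately show ?case
    using step(3) set_prefix_upto_insert by (metis subset_insertI2)
qed

text \<open>The only way for the new entry to get in front of x is to be swapped past it.\<close>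

lemma noisy_run_swap_bound:
  assumes run: "noisy_run L ord Tset mstar" and x: "x \<in> set (ord l)"
    and passed: "diag (Suc l) \<in> set (prefix_upto x (ord (Suc l)))"
  shows "mchk L (prefix_upto x (ord l) @ [diag (Suc l)]) \<le> mstar x"
proof -
  let ?new = "diag (Suc l)"
  obtain q where q: "ord (Suc l) = take q (ord l) @ ?new # drop q (ord l)"
    and swap: "\<forall>j. q + 1 < j \<and> j \<le> Suc l \<longrightarrow>
      mchk L (take (j - 1) (ord l) @ [?new]) \<le> mstar (ord l ! (j - 2))"
    using noisy_run_stepE[OF run] by metis
  have new: "?new \<notin> set (ord l)"
    using diag_Suc_notin_ord[OF run] .
  have ord: "length (ord l) = l" "distinct (ord l)"
    using noisy_run_ord[OF run] by auto
  obtain p where p: "p < l" "ord l ! p = x"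
    using x ord(1) by (auto simp: in_set_conv_nth)
  have "set (prefix_upto x (ord l)) \<subseteq> set (ord l)"
    using x by (auto simp: prefix_upto_def dest: set_takeWhileD)
  moreover have "x \<noteq> ?new"
    using x new by blast
  ultimately have "x \<notin> set (take q (ord l))"
    using passed new q set_prefix_upto_insert[of x ?new q "ord l"] by (auto split: if_splits)
  moreover have "x \<in> set (take q (ord l))" if "p < q"
    using that p ord(1) by (auto simp: in_set_conv_nth intro!: exI[of _ p])
  ultimately have "q \<le> p"
    by (meson not_le)
  then have "mchk L (take (Suc p) (ord l) @ [?new]) \<le> mstar x"
    using swap[rule_format, of "p + 2"] p by simp
  then show ?thesis
    using take_Suc_eq_prefix_upto[OF ord(2), of p] p ord(1) by simp
qed

lemma noisy_run_mstar_bound: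
  assumes run: "noisy_run L ord Tset mstar" and "1 \<le> l0" and "l0 \<le> l"
    and "adm_set L T S" and "S \<subseteq> set (prefix_upto (diag l0) (ord l))" and "diag l0 \<in> S"
  shows "card T \<le> mstar (diag l0)"
  using \<open>l0 \<le> l\<close> assms(5)
proof (induction l rule: dec_induct)
  case base
  have "card T \<le> mchk L (prefix_upto (diag l0) (ord l0))"
    by (rule adm_set_card_le_mchk[OF assms(4) base]) (simp add: last_prefix_upto assms(6))
  then show ?case
    using noisy_run_records(1)[OF run \<open>1 \<le> l0\<close>] by simp
next
  case (step l)
  let ?x = "diag l0" and ?new = "diag (Suc l)"
  have x: "?x \<in> set (ord l)"
    using diag_mem_ord[OF run \<open>1 \<le> l0\<close> step(1)] .
  obtain q where "ord (Suc l) = take q (ord l) @ ?new # drop q (ord l)"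
    using noisy_run_stepE[OF run] by metis
  moreover have "?x \<noteq> ?new"
    using x diag_Suc_notin_ord[OF run] by metis
  ultimately have S: "S \<subseteq> insert ?new (set (prefix_upto ?x (ord l)))"
    using step(4) set_prefix_upto_insert by (metis subset_insertI2 subset_trans)
  show ?case
  proof (cases "?new \<in> S")
    case True
    then have "card T \<le> mchk L (prefix_upto ?x (ord l) @ [?new])"
      using S assms(4) by (intro adm_set_card_le_mchk) auto
    also have "\<dots> \<le> mstar ?x"
      using noisy_run_swap_bound[OF run x] True step(4) by blast
    finally show ?thesis .
  next
    case False
    then show ?thesis
      using S step(3) by blast
  qed
qed

lemma noisy_run_adm_card_bound:
  assumes run: "noisy_run L ord Tset mstar" and l0: "1 \<le> l0" "l0 \<le> l"
    and adm: "adm L (prefix_upto (diag l0) (ord l)) T D"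
  shows "card T \<le> mchk L (prefix_upto (diag l0) (ord l0))"
proof -
  obtain S where "S \<subseteq> set (prefix_upto (diag l0) (ord l))" "diag l0 \<in> S" "adm_set L T S"
    using ex_adm_iff[THEN iffD1, OF exI, OF adm] unfolding last_prefix_upto by blast
  then show ?thesis
    using noisy_run_mstar_bound[OF run l0] noisy_run_records(1)[OF run l0(1)] by simp
qed

theorem mainTheorem15:
  fixes L :: "nat \<Rightarrow> 'u set"
    and ord :: "nat \<Rightarrow> (nat \<times> nat) list"
    and Tset :: "nat \<times> nat \<Rightarrow> 'u set"
    and mstar :: "nat \<times> nat \<Rightarrow> nat"
    and n i l k :: nat
  assumes "countable (UNIV :: 'u set)"
    and "infinite (UNIV :: 'u set)"
    and "\<forall>b \<ge> 1. infinite (L b)"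
    and "noisy_run L ord Tset mstar"
    and "1 \<le> i"
    and "diag_pos (n, i) \<le> l"
    and "k < length (ord l)"
    and "ord l ! k = (n, i)"
  shows "finite (Tset (n, i))
    \<and> (\<forall>T D. adm L (take (Suc k) (ord l)) T D \<longrightarrow> card T \<le> card (Tset (n, i)))
    \<and> ((\<exists>T D. adm L (take (Suc k) (ord l)) T D)
         \<longrightarrow> (\<exists>D. adm L (take (Suc k) (ord l)) (Tset (n, i)) D))"
proof -
  note run = \<open>noisy_run L ord Tset mstar\<close>
  have ord: "distinct (ord l)" "set (ord l) = diag ` {1..l}"
    using noisy_run_ord[OF run] by auto
  obtain l0 where l0: "1 \<le> l0" "l0 \<le> l" and x: "diag l0 = (n, i)"
    using nth_mem[OF assms(7)] assms(8) ord(2) by auto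
  have E: "take (Suc k) (ord l) = prefix_upto (diag l0) (ord l)"
    using take_Suc_eq_prefix_upto[OF ord(1) assms(7)] assms(8) x by simp
  show ?thesis
    unfolding E x[symmetric]
  proof (rule max_adm_transfer[OF noisy_run_records(2)[OF run l0(1)]
        set_prefix_upto_ord_mono[OF run l0]])
    show "last (prefix_upto (diag l0) (ord l)) = last (prefix_upto (diag l0) (ord l0))"
      by (simp add: last_prefix_upto)
  qed (rule noisy_run_adm_card_bound[OF run l0])
qed

end
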